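(* Let $P$ be the uniform probability distribution on the equilateral triangle with vertices $(0,0)$, $(1,0)$, $(\frac12,\frac{\sqrt3}{2})$. Let $N\ge3$ be an integer and $n=N(N+1)/2$. Then the $n$th quantization error of $P$ satisfies \[V_n(P)\le \frac{45N^3-28\sqrt{21}N^2+(301-28\sqrt{21})N-98}{324N^3(N-1)^2},\] and this upper bound equals $\frac{5}{36N^2}-\frac{14\sqrt{21}-45}{162N^3}+O(N^{-4})$ as $N\to\infty$.
   Context: For a Borel probability measure $P$ on $\mathbb R^2$ with finite second moment and $n\ge1$, the $n$th quantization error is $V_n(P)=\inf\{\int \min_{a\in\alpha}\|x-a\|^2\,dP(x): \alpha\subset\mathbb R^2,\ \mathrm{card}(\alpha)\le n\}$, where $\|\cdot\|$ is the Euclidean norm. The uniform distribution on the triangle has density $\frac{4}{\sqrt3}$ on the triangle and $0$ elsewhere. *)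

theory Defs
  imports "HOL-Analysis.Analysis" "HOL-Library.Landau_Symbols"
begin

definition eq_triangle :: "(real^2) set" where
  "eq_triangle = convex hull {vector [0, 0], vector [1, 0], vector [1/2, sqrt 3 / 2]}"

definition unif_triangle :: "(real^2) measure" where
  "unif_triangle = density lborel (\<lambda>x. ennreal (indicator eq_triangle x * (4 / sqrt 3)))"

definition distortion :: "('a::real_normed_vector) measure \<Rightarrow> 'a set \<Rightarrow> real" where
  "distortion M \<alpha> = (\<integral>x. Min ((\<lambda>a. (norm (x - a))\<^sup>2) ` \<alpha>) \<partial>M)"

definition quant_err :: "('a::real_normed_vector) measure \<Rightarrow> nat \<Rightarrow> real" where
  "quant_err M n = Inf {distortion M \<alpha> | \<alpha>. finite \<alpha> \<and> \<alpha> \<noteq> {} \<and> card \<alpha> \<le> n}"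

definition tri_bound :: "nat \<Rightarrow> real" where
  "tri_bound N = (45 * real N ^ 3 - 28 * sqrt 21 * real N ^ 2 + (301 - 28 * sqrt 21) * real N - 98)
                 / (324 * real N ^ 3 * (real N - 1)\<^sup>2)"

end

theory Submission
  imports Defs "HOL-Real_Asymp.Real_Asymp"
begin

text \<open>
  Use as codebook the triangular lattice with n + 1 = N points on each side, scaled so that the
  lattice triangle sits inside the given triangle at distance k lattice units from its sides.
  In skew lattice coordinates the squared distance becomes x^2 + x y + y^2 and the triangle
  becomes {x, y \<ge> -k, x + y \<le> n + k}. Cover this region by trapezoids, each attached to a
  nearby lattice point: the two kinds of unit cells, a band of width k along each side, and the
  three corners of the band. Bounding the distance to the nearest codebook point by the sum of
  the distances to the attached points over all trapezoids containing a point, the distortion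
  is at most an explicit sum of polynomial integrals. For k = sqrt 21 / 9 (so k^2 = 7/27) these
  sum to a simple expression, and comparing it with the claimed bound leaves a quartic in n that
  is positive for n \<ge> 2.
\<close>

section \<open>Integrating the hexagonal quadratic form over trapezoids\<close>

text \<open>tri_quad x y is the squared Euclidean length of x (1, 0) + y (1/2, sqrt 3 / 2).\<close>
definition tri_quad :: "real \<Rightarrow> real \<Rightarrow> real" where
  "tri_quad x y = x\<^sup>2 + x * y + y\<^sup>2"

definition tri_quad_prim :: "real \<Rightarrow> real \<Rightarrow> real" where
  "tri_quad_prim x y = x ^ 3 / 3 + x\<^sup>2 * y / 2 + x * y\<^sup>2"

definition tri_quad_prim2 :: "real \<Rightarrow> real \<Rightarrow> real \<Rightarrow> real" where
  "tri_quad_prim2 g b w = g ^ 3 / 3 * w + (g\<^sup>2 * b + g\<^sup>2 / 2) * w\<^sup>2 / 2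
     + (g * b\<^sup>2 + g * b + g) * w ^ 3 / 3 + (b ^ 3 / 3 + b\<^sup>2 / 2 + b) * w ^ 4 / 4"

definition trapezoid :: "real \<Rightarrow> real \<Rightarrow> real \<Rightarrow> real \<Rightarrow> real \<Rightarrow> real \<Rightarrow> (real \<times> real) set" where
  "trapezoid a b l0 l1 h0 h1 =
     {z. a \<le> snd z \<and> snd z \<le> b \<and> l0 + l1 * snd z \<le> fst z \<and> fst z \<le> h0 + h1 * snd z}"

definition trapezoid_quad ::
    "real \<Rightarrow> real \<Rightarrow> real \<Rightarrow> real \<Rightarrow> real \<Rightarrow> real \<Rightarrow> real \<Rightarrow> real \<Rightarrow> real" where
  "trapezoid_quad a b l0 l1 h0 h1 p q =
       tri_quad_prim2 (h0 - p + h1 * q) h1 (b - q) - tri_quad_prim2 (h0 - p + h1 * q) h1 (a - q)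
     - tri_quad_prim2 (l0 - p + l1 * q) l1 (b - q) + tri_quad_prim2 (l0 - p + l1 * q) l1 (a - q)"

lemma tri_quad_nonneg: "0 \<le> tri_quad x y"
proof -
  have "0 \<le> (x + y / 2)\<^sup>2 + 3 / 4 * y\<^sup>2" by simp
  also have "\<dots> = tri_quad x y" by (simp add: tri_quad_def power2_eq_square algebra_simps)
  finally show ?thesis .
qed

lemma tri_quad_continuous [continuous_intros]:
  "continuous_on S f \<Longrightarrow> continuous_on S g \<Longrightarrow> continuous_on S (\<lambda>z. tri_quad (f z) (g z))"
  unfolding tri_quad_def by (intro continuous_intros)

lemma fundamental_theorem_of_calculus_real:
  fixes F f :: "real \<Rightarrow> real"
  assumes "a \<le> b" "\<And>x. (F has_real_derivative f x) (at x)"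
  shows "(f has_integral (F b - F a)) {a..b}"
  by (rule fundamental_theorem_of_calculus[OF assms(1)])
     (auto simp: has_real_derivative_iff_has_vector_derivative[symmetric]
           intro: has_field_derivative_at_within assms(2))

lemma has_real_derivative_tri_quad_prim:
  "((\<lambda>x. tri_quad_prim (x - p) y) has_real_derivative tri_quad (x - p) y) (at x)"
  unfolding tri_quad_prim_def tri_quad_def
  by (rule derivative_eq_intros refl | simp)+

lemma has_real_derivative_tri_quad_prim2:
  "((\<lambda>y. tri_quad_prim2 g b (y - q)) has_real_derivative tri_quad_prim (g + b * (y - q)) (y - q)) (at y)"
  unfolding tri_quad_prim_def tri_quad_prim2_def
  by (rule derivative_eq_intros refl | simp)+ (simp add: field_simps eval_nat_numeral)

lemma closed_trapezoid: "closed (trapezoid a b l0 l1 h0 h1)"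
  unfolding trapezoid_def by (intro closed_Collect_conj closed_Collect_le continuous_intros)

lemma trapezoid_borel [measurable]: "trapezoid a b l0 l1 h0 h1 \<in> sets borel"
  using closed_trapezoid by (rule borel_closed)

lemma affine_le_between:
  fixes y :: real
  assumes "a \<le> y" "y \<le> b" "l0 + l1 * a \<le> h0 + h1 * a" "l0 + l1 * b \<le> h0 + h1 * b"
  shows "l0 + l1 * y \<le> h0 + h1 * y"
proof (cases "l1 \<le> h1")
  case True
  then have "(h1 - l1) * a \<le> (h1 - l1) * y" using assms by (intro mult_left_mono) auto
  then show ?thesis using assms by (simp add: algebra_simps)
next
  case False
  then have "(h1 - l1) * b \<le> (h1 - l1) * y" using assms by (intro mult_left_mono_neg) auto
  then show ?thesis using assms by (simp add: algebra_simps)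
qed

lemma has_integral_tri_quad_section:
  assumes "l \<le> h"
  shows "((\<lambda>x. tri_quad (x - p) y) has_integral (tri_quad_prim (h - p) y - tri_quad_prim (l - p) y)) {l..h}"
  by (rule fundamental_theorem_of_calculus_real[OF assms has_real_derivative_tri_quad_prim])

lemma tri_quad_section_nonneg:
  assumes "l \<le> h"
  shows "0 \<le> tri_quad_prim (h - p) y - tri_quad_prim (l - p) y"
  by (rule has_integral_nonneg[OF has_integral_tri_quad_section[OF assms]]) (simp add: tri_quad_nonneg)

lemma has_integral_trapezoid_quad:
  assumes "a \<le> b"
  shows "((\<lambda>y. tri_quad_prim (h0 + h1 * y - p) (y - q) - tri_quad_prim (l0 + l1 * y - p) (y - q))
           has_integral trapezoid_quad a b l0 l1 h0 h1 p q) {a..b}"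
proof -
  have "((\<lambda>y. tri_quad_prim2 (h0 - p + h1 * q) h1 (y - q) - tri_quad_prim2 (l0 - p + l1 * q) l1 (y - q))
      has_real_derivative tri_quad_prim (h0 + h1 * y - p) (y - q) - tri_quad_prim (l0 + l1 * y - p) (y - q)) (at y)"
    for y
  proof -
    have "(h0 - p + h1 * q) + h1 * (y - q) = h0 + h1 * y - p"
         "(l0 - p + l1 * q) + l1 * (y - q) = l0 + l1 * y - p"
      by (simp_all add: algebra_simps)
    moreover have "((\<lambda>y. tri_quad_prim2 (h0 - p + h1 * q) h1 (y - q) - tri_quad_prim2 (l0 - p + l1 * q) l1 (y - q))
      has_real_derivative tri_quad_prim ((h0 - p + h1 * q) + h1 * (y - q)) (y - q)
        - tri_quad_prim ((l0 - p + l1 * q) + l1 * (y - q)) (y - q)) (at y)"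
      by (intro DERIV_diff has_real_derivative_tri_quad_prim2)
    ultimately show ?thesis by (simp only:)
  qed
  from fundamental_theorem_of_calculus_real[OF assms this] show ?thesis
    by (simp add: trapezoid_quad_def algebra_simps)
qed

lemma trapezoid_quad_nonneg:
  assumes "a \<le> b" "l0 + l1 * a \<le> h0 + h1 * a" "l0 + l1 * b \<le> h0 + h1 * b"
  shows "0 \<le> trapezoid_quad a b l0 l1 h0 h1 p q"
  by (rule has_integral_nonneg[OF has_integral_trapezoid_quad[OF assms(1)]])
     (use tri_quad_section_nonneg affine_le_between[OF _ _ assms(2,3)] in auto)

lemma nn_integral_trapezoid_quad:
  assumes ab: "a \<le> b" and ends: "l0 + l1 * a \<le> h0 + h1 * a" "l0 + l1 * b \<le> h0 + h1 * b"
  shows "(\<integral>\<^sup>+z. indicator (trapezoid a b l0 l1 h0 h1) z * ennreal (tri_quad (fst z - p) (snd z - q)) \<partial>lborel)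
           = ennreal (trapezoid_quad a b l0 l1 h0 h1 p q)"
proof -
  define f where "f = (\<lambda>z. indicator (trapezoid a b l0 l1 h0 h1) z * ennreal (tri_quad (fst z - p) (snd z - q)))"
  define P where "P = (\<lambda>y. tri_quad_prim (h0 + h1 * y - p) (y - q) - tri_quad_prim (l0 + l1 * y - p) (y - q))"
  have width: "l0 + l1 * y \<le> h0 + h1 * y" if "y \<in> {a..b}" for y
    using affine_le_between[OF _ _ ends] that by auto
  have [measurable]: "(\<lambda>z::real \<times> real. tri_quad (fst z - p) (snd z - q)) \<in> borel_measurable borel"
    by (intro borel_measurable_continuous_onI continuous_intros)
  have f_borel: "f \<in> borel_measurable (lborel \<Otimes>\<^sub>M lborel)"
    unfolding f_def lborel_prod by measurable
  have "integral\<^sup>N lborel f = (\<integral>\<^sup>+y. (\<integral>\<^sup>+x. f (x, y) \<partial>lborel) \<partial>lborel)"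
    using lborel_pair.nn_integral_snd[OF f_borel] lborel_prod[where 'a=real and 'b=real] by simp
  also have "\<dots> = (\<integral>\<^sup>+y. ennreal (P y) * indicator {a..b} y \<partial>lborel)"
  proof (rule nn_integral_cong)
    fix y :: real
    show "(\<integral>\<^sup>+x. f (x, y) \<partial>lborel) = ennreal (P y) * indicator {a..b} y"
    proof (cases "y \<in> {a..b}")
      case True
      have "(\<integral>\<^sup>+x. f (x, y) \<partial>lborel)
          = (\<integral>\<^sup>+x. ennreal (tri_quad (x - p) (y - q)) * indicator {l0 + l1 * y..h0 + h1 * y} x \<partial>lborel)"
        using True by (intro nn_integral_cong) (auto simp: f_def trapezoid_def indicator_def)
      also have "\<dots> = ennreal (P y)"
        unfolding P_def
        by (rule nn_integral_has_integral_lebesgue'[OF _ has_integral_tri_quad_section[OF width[OF True]]])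
           (simp add: tri_quad_nonneg)
      finally show ?thesis using True by simp
    next
      case False
      then have "f (x, y) = 0" for x by (auto simp: f_def trapezoid_def)
      then show ?thesis using False by simp
    qed
  qed
  also have "\<dots> = ennreal (trapezoid_quad a b l0 l1 h0 h1 p q)"
  proof (rule nn_integral_has_integral_lebesgue')
    show "(P has_integral trapezoid_quad a b l0 l1 h0 h1 p q) {a..b}"
      unfolding P_def by (rule has_integral_trapezoid_quad[OF ab])
    show "0 \<le> P y" if "y \<in> {a..b}" for y
      unfolding P_def by (rule tri_quad_section_nonneg[OF width[OF that]])
  qed
  finally show ?thesis by (simp add: f_def)
qed

section \<open>Skew coordinates\<close>

definition vec_of_pair :: "real \<times> real \<Rightarrow> real^2" where
  "vec_of_pair z = fst z *\<^sub>R axis 1 1 + snd z *\<^sub>R axis 2 1"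

lemma vec_of_pair_nth [simp]: "vec_of_pair z $ 1 = fst z" "vec_of_pair z $ 2 = snd z"
  by (simp_all add: vec_of_pair_def axis_def)

lemma continuous_on_vec_of_pair: "continuous_on UNIV vec_of_pair"
  unfolding vec_of_pair_def by (intro continuous_intros)

lemma vec_of_pair_borel [measurable]: "vec_of_pair \<in> borel_measurable borel"
  by (rule borel_measurable_continuous_onI[OF continuous_on_vec_of_pair])

lemma vec_of_pair_diff: "vec_of_pair a - vec_of_pair b = vec_of_pair (fst a - fst b, snd a - snd b)"
  by (simp add: vec_of_pair_def algebra_simps)

lemma norm_vec_of_pair: "(norm (vec_of_pair (a, b)))\<^sup>2 = a\<^sup>2 + b\<^sup>2"
  unfolding power2_norm_eq_inner inner_vec_def sum_2 by (simp add: power2_eq_square)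

lemma prod_Basis_vec2: "(\<Prod>b\<in>(Basis::(real^2) set). f b) = f (axis 1 1) * f (axis 2 1)"
proof -
  have B: "(Basis::(real^2) set) = {axis 1 1, axis 2 1}"
    by (auto simp: Basis_vec_def UNIV_2)
  have "axis 1 (1::real) \<noteq> (axis 2 1 :: real^2)"
    by (simp add: axis_eq_axis)
  then show ?thesis unfolding B by simp
qed

lemma distr_vec_of_pair_lborel: "distr lborel borel vec_of_pair = lborel"
proof (rule lborel_eqI[symmetric])
  fix l u :: "real^2" assume le: "\<And>b. b \<in> Basis \<Longrightarrow> l \<bullet> b \<le> u \<bullet> b"
  have "l $ 1 \<le> u $ 1" "l $ 2 \<le> u $ 2"
    using le[of "axis 1 1"] le[of "axis 2 1"] by (auto simp: Basis_vec_def inner_axis)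
  moreover have "vec_of_pair -` box l u = box (l $ 1, l $ 2) (u $ 1, u $ 2)"
    by (auto simp: mem_box_cart mem_box Basis_prod_def forall_2)
  ultimately show "emeasure (distr lborel borel vec_of_pair) (box l u) = (\<Prod>b\<in>Basis. (u - l) \<bullet> b)"
    by (simp add: emeasure_distr emeasure_lborel_box_eq Basis_prod_def ennreal_mult mult.commute
        prod_Basis_vec2 inner_axis)
qed simp

definition skew :: "real \<Rightarrow> real \<Rightarrow> real \<Rightarrow> real \<times> real \<Rightarrow> real^2" where
  "skew o1 o2 s z = vec_of_pair (o1 + s * (fst z + snd z / 2), o2 + s * (sqrt 3 / 2) * snd z)"

lemma skew_borel [measurable]: "skew o1 o2 s \<in> borel_measurable borel"
  by (rule borel_measurable_continuous_onI)
     (simp add: skew_def vec_of_pair_def; intro continuous_intros; simp)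

lemma norm_skew_diff:
  "(norm (skew o1 o2 s z - skew o1 o2 s w))\<^sup>2 = s\<^sup>2 * tri_quad (fst z - fst w) (snd z - snd w)"
proof -
  have "skew o1 o2 s z - skew o1 o2 s w
      = vec_of_pair (s * ((fst z - fst w) + (snd z - snd w) / 2), s * (sqrt 3 / 2) * (snd z - snd w))"
    unfolding skew_def vec_of_pair_diff by (rule arg_cong[where f=vec_of_pair]) (simp add: field_simps)
  then show ?thesis
    by (simp add: norm_vec_of_pair tri_quad_def power_mult_distrib power_divide field_simps)
       (simp add: power2_eq_square algebra_simps)
qed

lemma nn_integral_skew:
  fixes g :: "real^2 \<Rightarrow> ennreal"
  assumes g [measurable]: "g \<in> borel_measurable borel" and s: "0 < s"
  shows "(\<integral>\<^sup>+x. g x \<partial>lborel) = ennreal (s\<^sup>2 * sqrt 3 / 2) * (\<integral>\<^sup>+z. g (skew o1 o2 s z) \<partial>lborel)"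
proof -
  define a where "a = s * (sqrt 3 / 2)"
  have a: "0 < a" using s by (simp add: a_def)
  have inner: "(\<integral>\<^sup>+x. g (vec_of_pair (x, o2 + a * Y)) \<partial>lborel)
      = ennreal s * (\<integral>\<^sup>+X. g (skew o1 o2 s (X, Y)) \<partial>lborel)" for Y
    using nn_integral_real_affine[of "\<lambda>x. g (vec_of_pair (x, o2 + a * Y))" s "o1 + s * Y / 2"] s
    by (simp add: skew_def a_def algebra_simps)
  have "(\<integral>\<^sup>+x. g x \<partial>lborel) = (\<integral>\<^sup>+z. g (vec_of_pair z) \<partial>lborel)"
    by (subst distr_vec_of_pair_lborel[symmetric]) (simp add: nn_integral_distr)
  also have "\<dots> = (\<integral>\<^sup>+y. (\<integral>\<^sup>+x. g (vec_of_pair (x, y)) \<partial>lborel) \<partial>lborel)"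
    using lborel_pair.nn_integral_snd[of "\<lambda>z. g (vec_of_pair z)"] lborel_prod[where 'a=real and 'b=real]
    by simp
  also have "\<dots> = ennreal a * (\<integral>\<^sup>+Y. (\<integral>\<^sup>+x. g (vec_of_pair (x, o2 + a * Y)) \<partial>lborel) \<partial>lborel)"
    using nn_integral_real_affine[of "\<lambda>y. \<integral>\<^sup>+x. g (vec_of_pair (x, y)) \<partial>lborel" a o2] a by simp
  also have "\<dots> = ennreal a * ennreal s * (\<integral>\<^sup>+Y. (\<integral>\<^sup>+X. g (skew o1 o2 s (X, Y)) \<partial>lborel) \<partial>lborel)"
    unfolding inner by (subst nn_integral_cmult) (auto simp: mult.assoc)
  also have "(\<integral>\<^sup>+Y. (\<integral>\<^sup>+X. g (skew o1 o2 s (X, Y)) \<partial>lborel) \<partial>lborel) = (\<integral>\<^sup>+z. g (skew o1 o2 s z) \<partial>lborel)"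
    using lborel_pair.nn_integral_snd[of "\<lambda>z. g (skew o1 o2 s z)"] lborel_prod[where 'a=real and 'b=real]
    by simp
  also have "ennreal a * ennreal s = ennreal (s\<^sup>2 * sqrt 3 / 2)"
    using a s by (simp add: ennreal_mult[symmetric] a_def power2_eq_square)
  finally show ?thesis .
qed

definition inflated_triangle :: "real \<Rightarrow> real \<Rightarrow> (real \<times> real) set" where
  "inflated_triangle c k = {z. -k \<le> fst z \<and> -k \<le> snd z \<and> fst z + snd z \<le> c + k}"

lemma skew_preimage_eq_triangle:
  assumes s: "0 < s" and sc: "s * (c + 3 * k) = 1"
    and T: "skew (3 * k * s / 2) (k * s * sqrt 3 / 2) s z \<in> eq_triangle"
  shows "z \<in> inflated_triangle c k"
proof -
  obtain u v w where uvw: "0 \<le> u" "0 \<le> v" "0 \<le> w" "u + v + w = 1"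
    and eq: "skew (3 * k * s / 2) (k * s * sqrt 3 / 2) s z
               = u *\<^sub>R vector [0, 0] + v *\<^sub>R vector [1, 0] + w *\<^sub>R vector [1 / 2, sqrt 3 / 2]"
    using T unfolding eq_triangle_def convex_hull_3 by blast
  have e1: "3 * k * s / 2 + s * (fst z + snd z / 2) = v + w / 2"
    using arg_cong[OF eq, of "\<lambda>x. x $ 1"] by (simp add: skew_def)
  have "(sqrt 3 / 2) * (s * (k + snd z)) = (sqrt 3 / 2) * w"
    using arg_cong[OF eq, of "\<lambda>x. x $ 2"] by (simp add: skew_def algebra_simps)
  then have w: "w = s * (k + snd z)" by simp
  with e1 have v: "v = s * (k + fst z)" by (simp add: field_simps)
  have "s * (2 * k + fst z + snd z) \<le> s * (c + 3 * k)"
    using v w uvw sc by (simp add: algebra_simps)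
  then show ?thesis
    using v w uvw s by (simp add: inflated_triangle_def zero_le_mult_iff)
qed

section \<open>Trapezoids attached to lattice points\<close>

text \<open>Piece a b l0 l1 h0 h1 p q is the trapezoid a \<le> y \<le> b, l0 + l1 y \<le> x \<le> h0 + h1 y
  together with the lattice point (p, q) it is attached to.\<close>
datatype piece = Piece real real real real real real real real

fun piece_set :: "piece \<Rightarrow> (real \<times> real) set" where
  "piece_set (Piece a b l0 l1 h0 h1 p q) = trapezoid a b l0 l1 h0 h1"

fun piece_center :: "piece \<Rightarrow> real \<times> real" where
  "piece_center (Piece a b l0 l1 h0 h1 p q) = (p, q)"

fun piece_ok :: "piece \<Rightarrow> bool" where
  "piece_ok (Piece a b l0 l1 h0 h1 p q) \<longleftrightarrow> a \<le> b \<and> l0 + l1 * a \<le> h0 + h1 * a \<and> l0 + l1 * b \<le> h0 + h1 * b"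

fun piece_val :: "piece \<Rightarrow> real" where
  "piece_val (Piece a b l0 l1 h0 h1 p q) = trapezoid_quad a b l0 l1 h0 h1 p q"

fun piece_shift :: "nat \<times> nat \<Rightarrow> piece \<Rightarrow> piece" where
  "piece_shift (i, j) (Piece a b l0 l1 h0 h1 p q) =
     Piece (a + real j) (b + real j) (l0 + real i - l1 * real j) l1 (h0 + real i - h1 * real j) h1
       (p + real i) (q + real j)"

definition piece_fun :: "piece \<Rightarrow> real \<times> real \<Rightarrow> ennreal" where
  "piece_fun P z = indicator (piece_set P) z
     * ennreal (tri_quad (fst z - fst (piece_center P)) (snd z - snd (piece_center P)))"

lemma piece_fun_borel [measurable]: "piece_fun P \<in> borel_measurable borel"
proof -
  have "piece_set P \<in> sets borel" by (cases P) simp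
  moreover have "(\<lambda>z. tri_quad (fst z - fst (piece_center P)) (snd z - snd (piece_center P))) \<in> borel_measurable borel"
    by (intro borel_measurable_continuous_onI continuous_intros)
  ultimately show ?thesis unfolding piece_fun_def by measurable
qed

lemma piece_fun_eq:
  "z \<in> piece_set P \<Longrightarrow> piece_fun P z = ennreal (tri_quad (fst z - fst (piece_center P)) (snd z - snd (piece_center P)))"
  by (simp add: piece_fun_def)

lemma nn_integral_piece_fun: "piece_ok P \<Longrightarrow> (\<integral>\<^sup>+z. piece_fun P z \<partial>lborel) = ennreal (piece_val P)"
  by (cases P) (simp add: piece_fun_def nn_integral_trapezoid_quad)

lemma piece_val_nonneg: "piece_ok P \<Longrightarrow> 0 \<le> piece_val P"
  by (cases P) (simp add: trapezoid_quad_nonneg)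

lemma piece_val_shift [simp]: "piece_val (piece_shift t P) = piece_val P"
  by (cases t; cases P) (simp add: trapezoid_quad_def algebra_simps)

lemma piece_ok_shift [simp]: "piece_ok (piece_shift t P) = piece_ok P"
  by (cases t; cases P) (simp add: algebra_simps)

lemma piece_center_shift [simp]:
  "piece_center (piece_shift t P) = (fst (piece_center P) + real (fst t), snd (piece_center P) + real (snd t))"
  by (cases t; cases P) simp

lemma mem_piece_set_shift:
  "z \<in> piece_set (piece_shift t P) \<longleftrightarrow> (fst z - real (fst t), snd z - real (snd t)) \<in> piece_set P"
  by (cases t; cases P) (auto simp: trapezoid_def algebra_simps)

lemma borel_measurable_sum_list:
  fixes f :: "'i \<Rightarrow> 'a \<Rightarrow> 'b::{second_countable_topology, topological_monoid_add}"
  shows "(\<And>x. x \<in> set xs \<Longrightarrow> f x \<in> borel_measurable M) \<Longrightarrow> (\<lambda>z. \<Sum>x\<leftarrow>xs. f x z) \<in> borel_measurable M"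
  by (induction xs) (auto intro: borel_measurable_add)

lemma nn_integral_sum_list:
  "(\<And>x. x \<in> set xs \<Longrightarrow> f x \<in> borel_measurable M)
     \<Longrightarrow> (\<integral>\<^sup>+z. (\<Sum>x\<leftarrow>xs. f x z) \<partial>M) = (\<Sum>x\<leftarrow>xs. integral\<^sup>N M (f x))"
  by (induction xs) (simp_all add: nn_integral_add borel_measurable_sum_list)

lemma sum_list_ennreal:
  "(\<And>x. x \<in> set xs \<Longrightarrow> 0 \<le> f x) \<Longrightarrow> (\<Sum>x\<leftarrow>xs. ennreal (f x)) = ennreal (\<Sum>x\<leftarrow>xs. f x)"
proof (induction xs)
  case (Cons a xs)
  have "0 \<le> (\<Sum>x\<leftarrow>xs. f x)" using Cons.prems by (intro sum_list_nonneg) auto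
  with Cons show ?case by (simp add: ennreal_plus)
qed simp

definition translates_fun :: "(nat \<times> nat) set \<Rightarrow> piece list \<Rightarrow> real \<times> real \<Rightarrow> ennreal" where
  "translates_fun I S z = (\<Sum>t\<in>I. \<Sum>P\<leftarrow>S. piece_fun (piece_shift t P) z)"

definition covered_by :: "(nat \<times> nat) set \<Rightarrow> piece list \<Rightarrow> real \<times> real \<Rightarrow> bool" where
  "covered_by I S z \<longleftrightarrow> (\<exists>t\<in>I. \<exists>P\<in>set S. z \<in> piece_set (piece_shift t P))"

lemma translates_fun_borel [measurable]: "translates_fun I S \<in> borel_measurable borel"
  unfolding translates_fun_def by (intro borel_measurable_sum borel_measurable_sum_list piece_fun_borel)

lemma nn_integral_translates_fun:
  assumes "finite I" "\<And>P. P \<in> set S \<Longrightarrow> piece_ok P"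
  shows "(\<integral>\<^sup>+z. translates_fun I S z \<partial>lborel) = ennreal (real (card I) * (\<Sum>P\<leftarrow>S. piece_val P))"
proof -
  have "(\<integral>\<^sup>+z. translates_fun I S z \<partial>lborel) = (\<Sum>t\<in>I. \<Sum>P\<leftarrow>S. \<integral>\<^sup>+z. piece_fun (piece_shift t P) z \<partial>lborel)"
    unfolding translates_fun_def
    by (simp add: nn_integral_sum nn_integral_sum_list borel_measurable_sum_list)
  also have "\<dots> = of_nat (card I) * (\<Sum>P\<leftarrow>S. ennreal (piece_val P))"
    using assms(2) by (simp add: nn_integral_piece_fun cong: map_cong)
  also have "(\<Sum>P\<leftarrow>S. ennreal (piece_val P)) = ennreal (\<Sum>P\<leftarrow>S. piece_val P)"
    using assms(2) by (intro sum_list_ennreal piece_val_nonneg)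
  also have "of_nat (card I) * \<dots> = ennreal (real (card I) * (\<Sum>P\<leftarrow>S. piece_val P))"
    by (simp add: ennreal_of_nat_eq_real_of_nat ennreal_mult')
  finally show ?thesis .
qed

lemma translates_fun_ge:
  assumes "finite I" "t \<in> I" "P \<in> set S"
  shows "piece_fun (piece_shift t P) z \<le> translates_fun I S z"
proof -
  have "piece_fun (piece_shift t P) z \<le> (\<Sum>P\<leftarrow>S. piece_fun (piece_shift t P) z)"
    using assms(3) by (intro member_le_sum_list) auto
  also have "\<dots> \<le> translates_fun I S z"
    unfolding translates_fun_def by (rule member_le_sum) (use assms in auto)
  finally show ?thesis .
qed

section \<open>Covering the pulled-back triangle\<close>

text \<open>In lattice coordinates relative to a lattice point, up_cell and down_cell cover the unit
  triangles x, y \<ge> 0, x + y \<le> 1 and x, y \<le> 1, x + y \<ge> 1 by the parts nearest to each vertex;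
  the strips cover the part of the band of width k outside one unit segment of the bottom, left
  and slanted side, and the corner tables cover the three corners of that band.\<close>

definition up_cell :: "piece list" where
  "up_cell =
    [Piece 0 (1/3) 0 0 (1/2) (-1/2) 0 0,
     Piece (1/3) (1/2) 0 0 1 (-2) 0 0,
     Piece 0 (1/3) (1/2) (-1/2) 1 (-1) 1 0,
     Piece (1/3) (1/2) 0 1 1 (-1) 1 0,
     Piece (1/3) (1/2) 1 (-2) 0 1 0 1,
     Piece (1/2) 1 0 0 1 (-1) 0 1]"

definition down_cell :: "piece list" where
  "down_cell =
    [Piece (2/3) 1 1 (-1/2) 1 0 1 1,
     Piece (1/2) (2/3) 2 (-2) 1 0 1 1,
     Piece (2/3) 1 1 (-1) 1 (-1/2) 0 1,
     Piece (1/2) (2/3) 1 (-1) 0 1 0 1,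
     Piece (1/2) (2/3) 0 1 2 (-2) 1 0,
     Piece 0 (1/2) 1 (-1) 1 0 1 0]"

definition bottom_strip :: "real \<Rightarrow> piece list" where
  "bottom_strip k =
    [Piece (-k) 0 0 (-1/2) (1/2) (-1/2) 0 0,
     Piece (-k) 0 (1/2) (-1/2) 1 (-1/2) 1 0]"

definition left_strip :: "real \<Rightarrow> piece list" where
  "left_strip k =
    [Piece 0 (k/2) 0 (-2) 0 0 0 0,
     Piece (k/2) (1/2) (-k) 0 0 0 0 0,
     Piece (1/2) (1/2 + k/2) (-k) 0 1 (-2) 0 0,
     Piece (1/2) (1/2 + k/2) 1 (-2) 0 0 0 1,
     Piece (1/2 + k/2) 1 (-k) 0 0 0 0 1,
     Piece 1 (1 + k/2) (-k) 0 2 (-2) 0 1]"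

definition hyp_strip :: "real \<Rightarrow> piece list" where
  "hyp_strip k =
    [Piece (-1) (-1 + k/2) 0 (-1) 2 1 1 (-1),
     Piece (-1 + k/2) (-1/2) 0 (-1) k (-1) 1 (-1),
     Piece (-1/2) (-1/2 + k/2) 1 1 k (-1) 1 (-1),
     Piece (-1/2) (-1/2 + k/2) 0 (-1) 1 1 0 0,
     Piece (-1/2 + k/2) 0 0 (-1) k (-1) 0 0,
     Piece 0 (k/2) 0 1 k (-1) 0 0]"

definition corner_bl :: "real \<Rightarrow> piece list" where
  "corner_bl k =
    [Piece (-k) 0 (-k) 0 0 (-1/2) 0 0,
     Piece 0 (k/2) (-k) 0 0 (-2) 0 0]"

definition corner_br :: "real \<Rightarrow> piece list" where
  "corner_br k =
    [Piece (-k) 0 0 (-1/2) k (-1) 0 0,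
     Piece 0 (k/2) 0 1 k (-1) 0 0]"

definition corner_top :: "real \<Rightarrow> piece list" where
  "corner_top k =
    [Piece 0 (k/2) 0 (-2) 0 1 0 0,
     Piece (k/2) (2 * k) (-k) 0 k (-1) 0 0]"

lemma up_cell_covers: "0 \<le> x \<Longrightarrow> 0 \<le> y \<Longrightarrow> x + y \<le> 1 \<Longrightarrow> \<exists>P\<in>set up_cell. (x, y) \<in> piece_set P"
  unfolding up_cell_def by (simp add: trapezoid_def) linarith

lemma down_cell_covers: "x \<le> 1 \<Longrightarrow> y \<le> 1 \<Longrightarrow> 1 \<le> x + y \<Longrightarrow> \<exists>P\<in>set down_cell. (x, y) \<in> piece_set P"
  unfolding down_cell_def by (simp add: trapezoid_def) linarith

lemma bottom_strip_covers:
  "0 < k \<Longrightarrow> k < 1 \<Longrightarrow> -k \<le> y \<Longrightarrow> y \<le> 0 \<Longrightarrow> 0 \<le> x + y/2 \<Longrightarrow> x + y/2 \<le> 1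
     \<Longrightarrow> \<exists>P\<in>set (bottom_strip k). (x, y) \<in> piece_set P"
  unfolding bottom_strip_def by (simp add: trapezoid_def) linarith

lemma left_strip_covers:
  "0 < k \<Longrightarrow> k < 1 \<Longrightarrow> -k \<le> x \<Longrightarrow> x \<le> 0 \<Longrightarrow> 0 \<le> x/2 + y \<Longrightarrow> x/2 + y \<le> 1
     \<Longrightarrow> \<exists>P\<in>set (left_strip k). (x, y) \<in> piece_set P"
  unfolding left_strip_def by (simp add: trapezoid_def) linarith

lemma hyp_strip_covers:
  "0 < k \<Longrightarrow> k < 1 \<Longrightarrow> 0 \<le> x + y \<Longrightarrow> x + y \<le> k \<Longrightarrow> -2 \<le> y - x \<Longrightarrow> y - x \<le> 0
     \<Longrightarrow> \<exists>P\<in>set (hyp_strip k). (x, y) \<in> piece_set P"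
  unfolding hyp_strip_def by (simp add: trapezoid_def) linarith

lemma corner_bl_covers:
  "0 < k \<Longrightarrow> k < 1 \<Longrightarrow> -k \<le> x \<Longrightarrow> -k \<le> y \<Longrightarrow> x + y/2 \<le> 0 \<Longrightarrow> x/2 + y \<le> 0
     \<Longrightarrow> \<exists>P\<in>set (corner_bl k). (x, y) \<in> piece_set P"
  unfolding corner_bl_def by (simp add: trapezoid_def) linarith

lemma corner_br_covers:
  "0 < k \<Longrightarrow> k < 1 \<Longrightarrow> -k \<le> y \<Longrightarrow> x + y \<le> k \<Longrightarrow> 0 \<le> x + y/2 \<Longrightarrow> y - x \<le> 0
     \<Longrightarrow> \<exists>P\<in>set (corner_br k). (x, y) \<in> piece_set P"
  unfolding corner_br_def by (simp add: trapezoid_def) linarith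

lemma corner_top_covers:
  "0 < k \<Longrightarrow> k < 1 \<Longrightarrow> -k \<le> x \<Longrightarrow> x + y \<le> k \<Longrightarrow> 0 \<le> x/2 + y \<Longrightarrow> 0 \<le> y - x
     \<Longrightarrow> \<exists>P\<in>set (corner_top k). (x, y) \<in> piece_set P"
  unfolding corner_top_def by (simp add: trapezoid_def) linarith

lemma up_cell_val: "(\<Sum>P\<leftarrow>up_cell. piece_val P) = 5/72"
  by (simp add: up_cell_def trapezoid_quad_def tri_quad_prim2_def power_divide field_simps)

lemma down_cell_val: "(\<Sum>P\<leftarrow>down_cell. piece_val P) = 5/72"
  by (simp add: down_cell_def trapezoid_quad_def tri_quad_prim2_def power_divide field_simps)

context
  fixes k :: real
  assumes k2: "k\<^sup>2 = 7/27"
begin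

lemma bottom_strip_val: "(\<Sum>P\<leftarrow>bottom_strip k. piece_val P) = 4 * k / 27"
  by (simp add: bottom_strip_def trapezoid_quad_def tri_quad_prim2_def power_divide field_simps) (use k2 in algebra)

lemma left_strip_val: "(\<Sum>P\<leftarrow>left_strip k. piece_val P) = 4 * k / 27"
  by (simp add: left_strip_def trapezoid_quad_def tri_quad_prim2_def power_divide field_simps) (use k2 in algebra)

lemma hyp_strip_val: "(\<Sum>P\<leftarrow>hyp_strip k. piece_val P) = 4 * k / 27"
  by (simp add: hyp_strip_def trapezoid_quad_def tri_quad_prim2_def power_divide field_simps) (use k2 in algebra)

lemma corner_bl_val: "(\<Sum>P\<leftarrow>corner_bl k. piece_val P) = 49/648"
  by (simp add: corner_bl_def trapezoid_quad_def tri_quad_prim2_def power_divide field_simps) (use k2 in algebra)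

lemma corner_br_val: "(\<Sum>P\<leftarrow>corner_br k. piece_val P) = 49/648"
  by (simp add: corner_br_def trapezoid_quad_def tri_quad_prim2_def power_divide field_simps) (use k2 in algebra)

lemma corner_top_val: "(\<Sum>P\<leftarrow>corner_top k. piece_val P) = 49/648"
  by (simp add: corner_top_def trapezoid_quad_def tri_quad_prim2_def power_divide field_simps) (use k2 in algebra)

end

definition up_index :: "nat \<Rightarrow> (nat \<times> nat) set" where
  "up_index n = {(i, j). i + j < n}"

lemma finite_up_index [simp]: "finite (up_index n)"
proof -
  have "up_index n \<subseteq> {..<n} \<times> {..<n}" by (auto simp: up_index_def)
  then show ?thesis by (rule finite_subset) auto
qed

lemma card_up_index: "2 * card (up_index n) = n * (n + 1)"
proof (induction n)
  case (Suc n)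
  have "up_index (Suc n) = up_index n \<union> (\<lambda>i. (i, n - i)) ` {..n}"
    by (auto simp: up_index_def image_iff)
  moreover have "up_index n \<inter> (\<lambda>i. (i, n - i)) ` {..n} = {}" by (auto simp: up_index_def)
  moreover have "inj_on (\<lambda>i. (i, n - i)) {..n}" by (auto intro: inj_onI)
  ultimately have "card (up_index (Suc n)) = card (up_index n) + (n + 1)"
    by (simp add: card_Un_disjoint card_image)
  then show ?case using Suc by simp
qed (simp add: up_index_def)

definition tri_lattice :: "nat \<Rightarrow> (real \<times> real) set" where
  "tri_lattice n = {c. fst c \<in> \<nat> \<and> snd c \<in> \<nat> \<and> fst c + snd c \<le> real n}"

lemma tri_lattice_eq_image: "tri_lattice n = (\<lambda>(i, j). (real i, real j)) ` up_index (Suc n)"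
proof
  show "tri_lattice n \<subseteq> (\<lambda>(i, j). (real i, real j)) ` up_index (Suc n)"
  proof
    fix c assume "c \<in> tri_lattice n"
    then obtain i j where "c = (real i, real j)" "real i + real j \<le> real n"
      by (cases c) (auto simp: tri_lattice_def elim!: Nats_cases)
    then show "c \<in> (\<lambda>(i, j). (real i, real j)) ` up_index (Suc n)"
      by (auto simp: up_index_def image_iff)
  qed
qed (auto simp: tri_lattice_def up_index_def)

definition cover_families :: "nat \<Rightarrow> real \<Rightarrow> ((nat \<times> nat) set \<times> piece list) list" where
  "cover_families n k =
    [(up_index n, up_cell), (up_index (n - 1), down_cell),
     ((\<lambda>i. (i, 0)) ` {..<n}, bottom_strip k), ((\<lambda>j. (0, j)) ` {..<n}, left_strip k),
     ((\<lambda>i. (i, n - i)) ` {..<n}, hyp_strip k),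
     ({(0, 0)}, corner_bl k), ({(n, 0)}, corner_br k), ({(0, n)}, corner_top k)]"

definition cover_fun :: "nat \<Rightarrow> real \<Rightarrow> real \<times> real \<Rightarrow> ennreal" where
  "cover_fun n k z = (\<Sum>F\<leftarrow>cover_families n k. translates_fun (fst F) (snd F) z)"

lemma cover_families_finite: "F \<in> set (cover_families n k) \<Longrightarrow> finite (fst F)"
  by (auto simp: cover_families_def)

lemma cover_families_ok:
  assumes "0 < k" "k < 1"
  shows "\<forall>F\<in>set (cover_families n k). \<forall>P\<in>set (snd F). piece_ok P"
  using assms by (simp add: cover_families_def up_cell_def down_cell_def bottom_strip_def left_strip_def
      hyp_strip_def corner_bl_def corner_br_def corner_top_def)

lemma cover_families_centers:
  "\<forall>F\<in>set (cover_families n k). \<forall>t\<in>fst F. \<forall>P\<in>set (snd F). piece_center (piece_shift t P) \<in> tri_lattice n"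
proof -
  have "real (n - i) + -1 \<in> \<nat>" if "i < n" for i
  proof -
    have "real (n - i) + -1 = real (n - i - 1)" using that by (simp add: of_nat_diff)
    then show ?thesis by simp
  qed
  moreover have "2 + (real i + real j) \<le> real n" if "i + j < n - 1" for i j
  proof -
    have "real (i + j + 2) \<le> real n" using that by linarith
    then show ?thesis by simp
  qed
  ultimately show ?thesis
    by (simp add: cover_families_def tri_lattice_def up_index_def up_cell_def down_cell_def
        bottom_strip_def left_strip_def hyp_strip_def corner_bl_def corner_br_def corner_top_def of_nat_diff)
       (smt (verit))
qed

lemma cover_familiesI:
  assumes "(I, S) \<in> set (cover_families n k)" "t \<in> I"
    and "\<exists>P\<in>set S. (x - real (fst t), y - real (snd t)) \<in> piece_set P"
  shows "\<exists>F\<in>set (cover_families n k). covered_by (fst F) (snd F) (x, y)"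
  using assms unfolding covered_by_def by (force simp: mem_piece_set_shift)

lemma covers_lattice_triangle:
  assumes n: "1 \<le> n" and xy: "0 \<le> x" "0 \<le> y" "x + y \<le> real n"
  shows "\<exists>F\<in>set (cover_families n k). covered_by (fst F) (snd F) (x, y)"
proof -
  define i where "i = nat \<lfloor>x\<rfloor>"
  define j where "j = nat \<lfloor>y\<rfloor>"
  have ix: "real i \<le> x" "x < real i + 1" and jy: "real j \<le> y" "y < real j + 1"
    using xy unfolding i_def j_def by linarith+
  then have "i + j \<le> n" using xy by linarith
  then consider (up) "x - i + (y - j) \<le> 1" "i + j < n" | (down) "x - i + (y - j) > 1"
    | (vertex) "x - i + (y - j) \<le> 1" "i + j = n"
    by linarith
  then show ?thesis
  proof cases
    case up
    then show ?thesis
      by (intro cover_familiesI[of "up_index n" up_cell _ _ "(i, j)"])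
         (use ix jy in \<open>auto simp: cover_families_def up_index_def intro!: up_cell_covers\<close>)
  next
    case down
    then have "i + j < n - 1" using ix jy xy by linarith
    then show ?thesis
      by (intro cover_familiesI[of "up_index (n - 1)" down_cell _ _ "(i, j)"])
         (use down ix jy in \<open>auto simp: cover_families_def up_index_def intro!: down_cell_covers\<close>)
  next
    case vertex
    then have "x = real i" "y = real j" using ix jy xy by auto
    consider "1 \<le> i" | "i = 0" "1 \<le> j" using vertex n by linarith
    then show ?thesis
    proof cases
      case 1
      then show ?thesis
        by (intro cover_familiesI[of "up_index n" up_cell _ _ "(i - 1, j)"])
           (use vertex \<open>x = i\<close> \<open>y = j\<close> in \<open>auto simp: cover_families_def up_index_def of_nat_diff intro!: up_cell_covers\<close>)
    next
      case 2
      then show ?thesis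
        by (intro cover_familiesI[of "up_index n" up_cell _ _ "(i, j - 1)"])
           (use vertex \<open>x = i\<close> \<open>y = j\<close> in \<open>auto simp: cover_families_def up_index_def of_nat_diff intro!: up_cell_covers\<close>)
    qed
  qed
qed

lemma covers_below:
  assumes k: "0 < k" "k < 1" and xy: "-k \<le> x" "-k \<le> y" "x + y \<le> real n + k" "y < 0"
  shows "\<exists>F\<in>set (cover_families n k). covered_by (fst F) (snd F) (x, y)"
proof -
  consider (left) "x + y/2 \<le> 0" | (right) "x + y/2 \<ge> n" | (middle) "0 < x + y/2" "x + y/2 < n"
    by linarith
  then show ?thesis
  proof cases
    case left
    then show ?thesis
      by (intro cover_familiesI[of "{(0, 0)}" "corner_bl k" _ _ "(0, 0)"])
         (use k xy in \<open>auto simp: cover_families_def intro!: corner_bl_covers\<close>)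
  next
    case right
    then show ?thesis
      by (intro cover_familiesI[of "{(n, 0)}" "corner_br k" _ _ "(n, 0)"])
         (use k xy in \<open>auto simp: cover_families_def intro!: corner_br_covers\<close>)
  next
    case middle
    define i where "i = nat \<lfloor>x + y/2\<rfloor>"
    have i: "real i \<le> x + y/2" "x + y/2 < real i + 1" "i < n"
      using middle unfolding i_def by linarith+
    then show ?thesis
      by (intro cover_familiesI[of "(\<lambda>i. (i, 0)) ` {..<n}" "bottom_strip k" _ _ "(i, 0)"])
         (use k xy in \<open>auto simp: cover_families_def intro!: bottom_strip_covers\<close>)
  qed
qed

lemma covers_left:
  assumes k: "0 < k" "k < 1" and xy: "-k \<le> x" "x + y \<le> real n + k" "x < 0" "0 \<le> y"
  shows "\<exists>F\<in>set (cover_families n k). covered_by (fst F) (snd F) (x, y)"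
proof -
  consider (bottom) "x/2 + y \<le> 0" | (top) "x/2 + y \<ge> n" | (middle) "0 < x/2 + y" "x/2 + y < n"
    by linarith
  then show ?thesis
  proof cases
    case bottom
    then show ?thesis
      by (intro cover_familiesI[of "{(0, 0)}" "corner_bl k" _ _ "(0, 0)"])
         (use k xy in \<open>auto simp: cover_families_def intro!: corner_bl_covers\<close>)
  next
    case top
    then show ?thesis
      by (intro cover_familiesI[of "{(0, n)}" "corner_top k" _ _ "(0, n)"])
         (use k xy in \<open>auto simp: cover_families_def intro!: corner_top_covers\<close>)
  next
    case middle
    define j where "j = nat \<lfloor>x/2 + y\<rfloor>"
    have j: "real j \<le> x/2 + y" "x/2 + y < real j + 1" "j < n"
      using middle unfolding j_def by linarith+
    then show ?thesis
      by (intro cover_familiesI[of "(\<lambda>j. (0, j)) ` {..<n}" "left_strip k" _ _ "(0, j)"])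
         (use k xy in \<open>auto simp: cover_families_def intro!: left_strip_covers\<close>)
  qed
qed

lemma covers_beyond_hypotenuse:
  assumes k: "0 < k" "k < 1" and xy: "0 \<le> x" "0 \<le> y" "real n < x + y" "x + y \<le> real n + k"
  shows "\<exists>F\<in>set (cover_families n k). covered_by (fst F) (snd F) (x, y)"
proof -
  consider (bottom) "y - x \<le> - real n" | (top) "y - x \<ge> n" | (middle) "- real n < y - x" "y - x < n"
    by linarith
  then show ?thesis
  proof cases
    case bottom
    then show ?thesis
      by (intro cover_familiesI[of "{(n, 0)}" "corner_br k" _ _ "(n, 0)"])
         (use k xy in \<open>auto simp: cover_families_def intro!: corner_br_covers\<close>)
  next
    case top
    then show ?thesis
      by (intro cover_familiesI[of "{(0, n)}" "corner_top k" _ _ "(0, n)"])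
         (use k xy in \<open>auto simp: cover_families_def intro!: corner_top_covers\<close>)
  next
    case middle
    define w where "w = (real n - (y - x)) / 2"
    define i where "i = nat \<lfloor>w\<rfloor>"
    have w: "0 < w" "w < n" using middle by (auto simp: w_def)
    then have i: "real i \<le> w" "w < real i + 1" "i < n" unfolding i_def by linarith+
    then have "real (n - i) = real n - real i" by (simp add: of_nat_diff)
    with i show ?thesis
      by (intro cover_familiesI[of "(\<lambda>i. (i, n - i)) ` {..<n}" "hyp_strip k" _ _ "(i, n - i)"])
         (use k xy in \<open>auto simp: cover_families_def w_def intro!: hyp_strip_covers\<close>)
  qed
qed

lemma covers_inflated_triangle:
  assumes "0 < k" "k < 1" "1 \<le> n" "z \<in> inflated_triangle (real n) k"
  shows "\<exists>F\<in>set (cover_families n k). covered_by (fst F) (snd F) z"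
proof -
  obtain x y where z: "z = (x, y)" by (cases z)
  have "-k \<le> x" "-k \<le> y" "x + y \<le> real n + k"
    using assms(4) by (auto simp: inflated_triangle_def z)
  then consider "y < 0" | "0 \<le> y" "x < 0" | "0 \<le> x" "0 \<le> y" "x + y \<le> real n"
    | "0 \<le> x" "0 \<le> y" "real n < x + y"
    by linarith
  then show ?thesis
    unfolding z
    by cases (use assms \<open>-k \<le> x\<close> \<open>-k \<le> y\<close> \<open>x + y \<le> real n + k\<close> in
        \<open>blast intro: covers_below covers_left covers_lattice_triangle covers_beyond_hypotenuse\<close>)+
qed

lemma cover_fun_borel [measurable]: "cover_fun n k \<in> borel_measurable borel"
  unfolding cover_fun_def by (intro borel_measurable_sum_list translates_fun_borel)

lemma cover_fun_bound:
  assumes "0 < k" "k < 1" "1 \<le> n" "z \<in> inflated_triangle (real n) k"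
  shows "\<exists>c\<in>tri_lattice n. ennreal (tri_quad (fst z - fst c) (snd z - snd c)) \<le> cover_fun n k z"
proof -
  obtain F t P where F: "F \<in> set (cover_families n k)" "t \<in> fst F" "P \<in> set (snd F)"
    and z: "z \<in> piece_set (piece_shift t P)"
    using covers_inflated_triangle[OF assms] unfolding covered_by_def by blast
  have "ennreal (tri_quad (fst z - fst (piece_center (piece_shift t P))) (snd z - snd (piece_center (piece_shift t P))))
      = piece_fun (piece_shift t P) z"
    using piece_fun_eq[OF z] by simp
  also have "\<dots> \<le> translates_fun (fst F) (snd F) z"
    using F cover_families_finite by (intro translates_fun_ge) auto
  also have "\<dots> \<le> cover_fun n k z"
    unfolding cover_fun_def using F by (intro member_le_sum_list) auto
  finally show ?thesis
    using cover_families_centers F by blast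
qed

lemma nn_integral_cover_fun:
  assumes k: "0 < k" "k < 1" "k\<^sup>2 = 7/27" and n: "1 \<le> n"
  shows "(\<integral>\<^sup>+z. cover_fun n k z \<partial>lborel) = ennreal (5 * (real n)\<^sup>2 / 72 + 4 * k * real n / 9 + 49/216)"
proof -
  have "(\<integral>\<^sup>+z. cover_fun n k z \<partial>lborel)
      = (\<Sum>F\<leftarrow>cover_families n k. ennreal (real (card (fst F)) * (\<Sum>P\<leftarrow>snd F. piece_val P)))"
    unfolding cover_fun_def
    using cover_families_finite cover_families_ok[OF k(1,2)]
    by (simp add: nn_integral_sum_list nn_integral_translates_fun cong: map_cong)
  also have "\<dots> = ennreal (\<Sum>F\<leftarrow>cover_families n k. real (card (fst F)) * (\<Sum>P\<leftarrow>snd F. piece_val P))"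
    using cover_families_ok[OF k(1,2)]
    by (intro sum_list_ennreal mult_nonneg_nonneg sum_list_nonneg) (auto intro: piece_val_nonneg)
  also have "(\<Sum>F\<leftarrow>cover_families n k. real (card (fst F)) * (\<Sum>P\<leftarrow>snd F. piece_val P))
      = 5 * (real n)\<^sup>2 / 72 + 4 * k * real n / 9 + 49/216"
  proof -
    have "2 * real (card (up_index n)) = real n * (real n + 1)"
      using arg_cong[OF card_up_index[of n], of real] by (simp add: algebra_simps)
    moreover have "2 * real (card (up_index (n - 1))) = (real n - 1) * real n"
      using arg_cong[OF card_up_index[of "n - 1"], of real] n by (simp add: of_nat_diff algebra_simps)
    ultimately show ?thesis
      by (simp add: cover_families_def card_image inj_on_def up_cell_val down_cell_val
          bottom_strip_val[OF k(3)] left_strip_val[OF k(3)] hyp_strip_val[OF k(3)]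
          corner_bl_val[OF k(3)] corner_br_val[OF k(3)] corner_top_val[OF k(3)] field_simps power2_eq_square)
  qed
  finally show ?thesis .
qed

section \<open>The lattice codebook\<close>

lemma distortion_nonneg: "finite \<alpha> \<Longrightarrow> \<alpha> \<noteq> {} \<Longrightarrow> 0 \<le> distortion M \<alpha>"
  unfolding distortion_def by (intro integral_nonneg_AE AE_I2 Min.boundedI) auto

lemma quant_err_le_distortion:
  assumes "finite \<alpha>" "\<alpha> \<noteq> {}" "card \<alpha> \<le> n"
  shows "quant_err M n \<le> distortion M \<alpha>"
  unfolding quant_err_def
  by (rule cInf_lower) (use assms distortion_nonneg in \<open>auto intro!: bdd_belowI[of _ 0]\<close>)

lemma distortion_le_of_nn_integral_le:
  fixes \<alpha> :: "'a::euclidean_space set"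
  assumes M: "sets M = sets borel" and \<alpha>: "finite \<alpha>" "\<alpha> \<noteq> {}"
    and le: "(\<integral>\<^sup>+x. ennreal (Min ((\<lambda>a. (norm (x - a))\<^sup>2) ` \<alpha>)) \<partial>M) \<le> ennreal D" and "0 \<le> D"
  shows "distortion M \<alpha> \<le> D"
proof -
  have "(\<lambda>x. Min ((\<lambda>a. (norm (x - a))\<^sup>2) ` \<alpha>)) \<in> borel_measurable borel"
    using \<alpha>(1) by measurable
  then have "distortion M \<alpha> = enn2real (\<integral>\<^sup>+x. ennreal (Min ((\<lambda>a. (norm (x - a))\<^sup>2) ` \<alpha>)) \<partial>M)"
    unfolding distortion_def using \<alpha>
    by (intro integral_eq_nn_integral AE_I2 Min.boundedI) (auto simp: measurable_cong_sets[OF M refl])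
  also have "\<dots> \<le> D"
    using le \<open>0 \<le> D\<close> by (intro enn2real_leI) auto
  finally show ?thesis .
qed

lemma eq_triangle_borel [measurable]: "eq_triangle \<in> sets borel"
  unfolding eq_triangle_def by (intro borel_closed compact_imp_closed finite_imp_compact_convex_hull) auto

definition lattice_scale :: "nat \<Rightarrow> real \<Rightarrow> real" where
  "lattice_scale n k = 1 / (real n + 3 * k)"

definition lattice_embed :: "nat \<Rightarrow> real \<Rightarrow> real \<times> real \<Rightarrow> real^2" where
  "lattice_embed n k =
     skew (3 * k * lattice_scale n k / 2) (k * lattice_scale n k * sqrt 3 / 2) (lattice_scale n k)"

definition lattice_codebook :: "nat \<Rightarrow> real \<Rightarrow> (real^2) set" where
  "lattice_codebook n k = lattice_embed n k ` tri_lattice n"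

lemma lattice_codebook_finite: "finite (lattice_codebook n k)"
  by (simp add: lattice_codebook_def tri_lattice_eq_image)

lemma lattice_codebook_nonempty: "lattice_codebook n k \<noteq> {}"
proof -
  have "(0, 0) \<in> up_index (Suc n)" by (simp add: up_index_def)
  then show ?thesis by (auto simp: lattice_codebook_def tri_lattice_eq_image)
qed

lemma card_lattice_codebook: "card (lattice_codebook n k) \<le> (n + 1) * (n + 2) div 2"
proof -
  have "card (lattice_codebook n k) \<le> card (up_index (Suc n))"
    unfolding lattice_codebook_def tri_lattice_eq_image image_image
    by (rule card_image_le) simp
  also have "\<dots> = (n + 1) * (n + 2) div 2"
    using card_up_index[of "Suc n"] by simp
  finally show ?thesis .
qed

lemma min_dist_lattice_codebook_le:
  assumes "0 < k" "k < 1" "1 \<le> n" "z \<in> inflated_triangle (real n) k"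
  shows "ennreal (Min ((\<lambda>a. (norm (lattice_embed n k z - a))\<^sup>2) ` lattice_codebook n k))
           \<le> ennreal ((lattice_scale n k)\<^sup>2) * cover_fun n k z"
proof -
  obtain c where c: "c \<in> tri_lattice n"
    and le: "ennreal (tri_quad (fst z - fst c) (snd z - snd c)) \<le> cover_fun n k z"
    using cover_fun_bound[OF assms] by blast
  have "Min ((\<lambda>a. (norm (lattice_embed n k z - a))\<^sup>2) ` lattice_codebook n k)
      \<le> (norm (lattice_embed n k z - lattice_embed n k c))\<^sup>2"
    using c lattice_codebook_finite by (intro Min_le) (auto simp: lattice_codebook_def)
  also have "\<dots> = (lattice_scale n k)\<^sup>2 * tri_quad (fst z - fst c) (snd z - snd c)"
    unfolding lattice_embed_def norm_skew_diff ..
  finally have "ennreal (Min ((\<lambda>a. (norm (lattice_embed n k z - a))\<^sup>2) ` lattice_codebook n k))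
      \<le> ennreal ((lattice_scale n k)\<^sup>2) * ennreal (tri_quad (fst z - fst c) (snd z - snd c))"
    by (simp add: ennreal_mult'[symmetric] tri_quad_nonneg ennreal_leI)
  also have "\<dots> \<le> ennreal ((lattice_scale n k)\<^sup>2) * cover_fun n k z"
    using le by (rule mult_left_mono) simp
  finally show ?thesis .
qed

lemma nn_integral_min_dist_lattice_codebook:
  assumes k: "0 < k" "k < 1" "k\<^sup>2 = 7/27" and n: "1 \<le> n"
  shows "(\<integral>\<^sup>+x. ennreal (Min ((\<lambda>a. (norm (x - a))\<^sup>2) ` lattice_codebook n k)) \<partial>unif_triangle)
     \<le> ennreal (2 * (lattice_scale n k) ^ 4 * (5 * (real n)\<^sup>2 / 72 + 4 * k * real n / 9 + 49/216))"
    (is "?lhs \<le> ennreal (2 * ?s ^ 4 * ?total)")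
proof -
  define m where "m x = Min ((\<lambda>a. (norm (x - a))\<^sup>2) ` lattice_codebook n k)" for x
  define G where "G x = ennreal (indicator eq_triangle x * (4 / sqrt 3)) * ennreal (m x)" for x
  have s: "0 < ?s" "?s * (real n + 3 * k) = 1" using k by (auto simp: lattice_scale_def)
  have [measurable]: "m \<in> borel_measurable borel"
    unfolding m_def[abs_def] using lattice_codebook_finite by measurable
  have G_borel: "G \<in> borel_measurable borel" unfolding G_def[abs_def] by measurable
  have G_le: "G (lattice_embed n k z) \<le> ennreal (4 / sqrt 3) * (ennreal (?s\<^sup>2) * cover_fun n k z)" for z
  proof (cases "lattice_embed n k z \<in> eq_triangle")
    case True
    then have "z \<in> inflated_triangle (real n) k"
      using skew_preimage_eq_triangle[OF s] by (simp add: lattice_embed_def)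
    then show ?thesis
      using True min_dist_lattice_codebook_le[OF k(1,2) n]
      by (simp add: G_def m_def mult_left_mono)
  qed (simp add: G_def)
  have "?lhs = (\<integral>\<^sup>+x. ennreal (m x) \<partial>unif_triangle)"
    by (simp add: m_def)
  also have "\<dots> = (\<integral>\<^sup>+x. G x \<partial>lborel)"
    unfolding unif_triangle_def G_def by (subst nn_integral_density) auto
  also have "\<dots> = ennreal (?s\<^sup>2 * sqrt 3 / 2) * (\<integral>\<^sup>+z. G (lattice_embed n k z) \<partial>lborel)"
    unfolding lattice_embed_def by (rule nn_integral_skew[OF G_borel s(1)])
  also have "\<dots> \<le> ennreal (?s\<^sup>2 * sqrt 3 / 2) * (\<integral>\<^sup>+z. ennreal (4 / sqrt 3) * (ennreal (?s\<^sup>2) * cover_fun n k z) \<partial>lborel)"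
    by (intro mult_left_mono nn_integral_mono G_le) auto
  also have "\<dots> = ennreal (?s\<^sup>2 * sqrt 3 / 2) * (ennreal (4 / sqrt 3) * (ennreal (?s\<^sup>2) * ennreal ?total))"
    by (simp add: nn_integral_cmult nn_integral_cover_fun[OF k n])
  also have "\<dots> = ennreal (2 * ?s ^ 4 * ?total)"
  proof -
    have "(?s\<^sup>2 * sqrt 3 / 2) * ((4 / sqrt 3) * (?s\<^sup>2 * ?total)) = 2 * ?s ^ 4 * ?total"
      by (simp add: field_simps power2_eq_square eval_nat_numeral)
    moreover have "0 \<le> ?total" using k by simp
    ultimately show ?thesis by (simp add: ennreal_mult'[symmetric])
  qed
  finally show ?thesis .
qed

section \<open>The bound and its expansion\<close>

lemma tri_bound_quartic_ineq:
  fixes x k :: real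
  assumes k2: "k\<^sup>2 = 7/27" and k0: "0 < k" and x: "2 \<le> x"
  shows "2 * (1 / (x + 3 * k)) ^ 4 * (5 * x\<^sup>2 / 72 + 4 * k * x / 9 + 49/216)
     \<le> (45 * (x + 1) ^ 3 - 28 * (9 * k) * (x + 1) ^ 2 + (301 - 28 * (9 * k)) * (x + 1) - 98)
         / (324 * (x + 1) ^ 3 * x\<^sup>2)"
proof -
  have kl: "0.46 < k"
  proof (rule ccontr)
    assume "\<not> 0.46 < k"
    then have "k\<^sup>2 \<le> 0.46\<^sup>2" using k0 by (intro power_mono) auto
    then show False using k2 by (simp add: power_divide)
  qed
  have ku: "k < 0.6"
  proof (rule ccontr)
    assume "\<not> k < 0.6"
    then have "0.6\<^sup>2 \<le> k\<^sup>2" by (intro power_mono) auto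
    then show False using k2 by (simp add: power_divide)
  qed
  define d0 where "d0 = 12152/9 - 2744 * k"
  define d1 where "d1 = -11564/9 + 2828 * k"
  define d2 where "d2 = -1428 + 3780 * k"
  define d3 where "d3 = 7532/3 - 4116 * k"
  define d4 where "d4 = -700 + 1596 * k"
  let ?a = "5 * x\<^sup>2 / 72 + 4 * k * x / 9 + 49/216"
  let ?c = "45 * (x + 1) ^ 3 - 28 * (9 * k) * (x + 1) ^ 2 + (301 - 28 * (9 * k)) * (x + 1) - 98"
  have "?c * (x + 3 * k) ^ 4 - 2 * ?a * (324 * (x + 1) ^ 3 * x\<^sup>2) = d0 + d1 * x + d2 * x\<^sup>2 + d3 * x ^ 3 + d4 * x ^ 4"
    unfolding d0_def d1_def d2_def d3_def d4_def using k2 by algebra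
  moreover have "0 \<le> d0 + d1 * x + d2 * x\<^sup>2 + d3 * x ^ 3 + d4 * x ^ 4"
  proof -
    have "d1 * 2 \<le> d1 * x" using x kl by (intro mult_left_mono) (auto simp: d1_def)
    moreover have "0 \<le> d0 + 2 * d1" using kl by (simp add: d0_def d1_def)
    moreover have "0 \<le> d2 * x\<^sup>2" "0 \<le> d3 * x ^ 3" "0 \<le> d4 * x ^ 4"
      using kl ku x by (simp_all add: d2_def d3_def d4_def)
    ultimately show ?thesis by linarith
  qed
  ultimately have "2 * ?a * (324 * (x + 1) ^ 3 * x\<^sup>2) \<le> ?c * (x + 3 * k) ^ 4" by linarith
  moreover have "0 < x + 3 * k" "0 < 324 * (x + 1) ^ 3 * x\<^sup>2" using x k0 by auto
  ultimately show ?thesis by (simp add: field_simps power_one_over)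
qed

lemma quant_err_unif_triangle_le:
  assumes N: "3 \<le> N"
  shows "quant_err unif_triangle (N * (N + 1) div 2) \<le> tri_bound N"
proof -
  define n where "n = N - 1"
  define k where "k = sqrt 21 / 9"
  have n: "2 \<le> n" "N = n + 1" using N by (auto simp: n_def)
  have k2: "k\<^sup>2 = 7/27" by (simp add: k_def power_divide)
  have k0: "0 < k" by (simp add: k_def)
  have k1: "k < 1"
  proof (rule ccontr)
    assume "\<not> k < 1"
    then have "1\<^sup>2 \<le> k\<^sup>2" by (intro power_mono) auto
    then show False using k2 by simp
  qed
  let ?total = "5 * (real n)\<^sup>2 / 72 + 4 * k * real n / 9 + 49/216"
  have "quant_err unif_triangle (N * (N + 1) div 2) \<le> distortion unif_triangle (lattice_codebook n k)"
    using card_lattice_codebook[of n k] n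
    by (intro quant_err_le_distortion lattice_codebook_finite lattice_codebook_nonempty)
       (simp add: algebra_simps)
  also have "\<dots> \<le> 2 * (lattice_scale n k) ^ 4 * ?total"
    using k0 by (intro distortion_le_of_nn_integral_le lattice_codebook_finite lattice_codebook_nonempty
        nn_integral_min_dist_lattice_codebook k0 k1 k2) (use n in \<open>auto simp: unif_triangle_def\<close>)
  also have "\<dots> \<le> tri_bound N"
    using tri_bound_quartic_ineq[OF k2 k0, of "real n"] n
    by (simp add: lattice_scale_def tri_bound_def k_def algebra_simps)
  finally show ?thesis .
qed

lemma tri_bound_minus_expansion:
  fixes x a :: real
  assumes "x \<noteq> 0" "x \<noteq> 1"
  shows "(45 * x ^ 3 - a * x\<^sup>2 + (301 - a) * x - 98) / (324 * x ^ 3 * (x - 1)\<^sup>2)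
           - (5 / (36 * x\<^sup>2) - (a / 2 - 45) / (162 * x ^ 3))
     = (436 - 3 * a) / 324 * (x / (x ^ 3 * (x - 1)\<^sup>2)) + (a - 188) / 324 * (1 / (x ^ 3 * (x - 1)\<^sup>2))"
proof -
  have "x - 1 \<noteq> 0" using assms by simp
  with assms have "(45 * x ^ 3 - a * x\<^sup>2 + (301 - a) * x - 98) / (324 * x ^ 3 * (x - 1)\<^sup>2)
           - (5 / (36 * x\<^sup>2) - (a / 2 - 45) / (162 * x ^ 3))
      = ((45 * x ^ 3 - a * x\<^sup>2 + (301 - a) * x - 98) - (x - 1)\<^sup>2 * (45 * x - a + 90)) / (324 * x ^ 3 * (x - 1)\<^sup>2)"
    by (simp add: field_simps) (simp add: algebra_simps eval_nat_numeral)
  also have "\<dots> = ((436 - 3 * a) * x + (a - 188)) / (324 * x ^ 3 * (x - 1)\<^sup>2)"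
    by (simp add: algebra_simps eval_nat_numeral)
  also have "\<dots> = (436 - 3 * a) / 324 * (x / (x ^ 3 * (x - 1)\<^sup>2)) + (a - 188) / 324 * (1 / (x ^ 3 * (x - 1)\<^sup>2))"
    using \<open>x - 1 \<noteq> 0\<close> assms by (simp add: field_simps)
  finally show ?thesis .
qed

lemma tri_bound_asymptotics:
  "(\<lambda>N. tri_bound N - (5 / (36 * real N ^ 2) - (14 * sqrt 21 - 45) / (162 * real N ^ 3)))
     \<in> O(\<lambda>N. 1 / real N ^ 4)"
proof -
  define a where "a = 28 * sqrt 21"
  define r where "r N = (436 - 3 * a) / 324 * (real N / (real N ^ 3 * (real N - 1)\<^sup>2))
      + (a - 188) / 324 * (1 / (real N ^ 3 * (real N - 1)\<^sup>2))" for N :: nat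
  have "r N = tri_bound N - (5 / (36 * real N ^ 2) - (14 * sqrt 21 - 45) / (162 * real N ^ 3))"
    if "2 \<le> N" for N
  proof -
    have "real N \<noteq> 0" "real N \<noteq> 1" "14 * sqrt 21 = a / 2" using that by (auto simp: a_def)
    then show ?thesis
      unfolding tri_bound_def r_def using tri_bound_minus_expansion[of "real N" a] by (simp add: a_def)
  qed
  then have ev: "\<forall>\<^sub>F N in sequentially. r N
      = tri_bound N - (5 / (36 * real N ^ 2) - (14 * sqrt 21 - 45) / (162 * real N ^ 3))"
    using eventually_ge_at_top[of "2::nat"] by (rule eventually_mono[rotated])
  have "r \<in> O(\<lambda>N. 1 / real N ^ 4)"
  proof -
    have "(\<lambda>N::nat. real N / (real N ^ 3 * (real N - 1)\<^sup>2)) \<in> O(\<lambda>N. 1 / real N ^ 4)"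
      by real_asymp
    moreover have "(\<lambda>N::nat. 1 / (real N ^ 3 * (real N - 1)\<^sup>2)) \<in> O(\<lambda>N. 1 / real N ^ 4)"
      by real_asymp
    ultimately show ?thesis
      unfolding r_def[abs_def] by (intro sum_in_bigo) (simp_all only: cmult_in_bigo_iff simp_thms)
  qed
  then show ?thesis
    using landau_o.big.in_cong[OF ev] by (simp only:)
qed

theorem theorem6p3:
  shows "(\<forall>N::nat. N \<ge> 3 \<longrightarrow> quant_err unif_triangle (N * (N + 1) div 2) \<le> tri_bound N)
    \<and> (\<lambda>N. tri_bound N - (5 / (36 * real N ^ 2) - (14 * sqrt 21 - 45) / (162 * real N ^ 3)))
        \<in> O(\<lambda>N. 1 / real N ^ 4)"
  using quant_err_unif_triangle_le tri_bound_asymptotics by blast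

end
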